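(* Let the standing assumptions and Assumption 1 hold, let $(\mathbf{x}^*,\mathbf{z}^*,\mathbf{y}^* )$ be a KKT point, let $\gamma>0$, let $c_1,c_2>0$ be constants and $T\ge1$, and run generalized Bregman ADMM with $\rho=\sqrt T$, $\rho_{\mathbf{x}}=\rho_{\mathbf{z}}=c_1\sqrt T$, $\tau=c_2\sqrt T$. Suppose $\|\mathbf{y}_t\|_2\le D_{\mathbf{y}}$ for all $t$. Then $$\sum_{t=0}^{T-1}R(t+1)\le D(\mathbf{w}^*,\mathbf{w}_0)+\frac{4(c_2/2+\gamma)D_{\mathbf{y}}^2}{c_2^2},$$ where here $R(t+1)=c_1B_{\varphi_{\mathbf{x}}}(\mathbf{x}_{t+1},\mathbf{x}_t)+c_1B_{\varphi_{\mathbf{z}}}(\mathbf{z}_{t+1},\mathbf{z}_t)+B_\phi(\mathbf{c}-\mathbf{A}\mathbf{x}_{t+1},\mathbf{B}\mathbf{z}_t)+\gamma\|\mathbf{A}\mathbf{x}_{t+1}+\mathbf{B}\mathbf{z}_{t+1}-\mathbf{c}\|_2^2$ and $D(\mathbf{w}^*,\mathbf{w}_0)=\frac{1}{2c_2T}\|\mathbf{y}^*-\mathbf{y}_0\|_2^2+B_\phi(\mathbf{B}\mathbf{z}^*,\mathbf{B}\mathbf{z}_0)+c_1B_{\varphi_{\mathbf{x}}}(\mathbf{x}^*,\mathbf{x}_0)+c_1B_{\varphi_{\mathbf{z}}}(\mathbf{z}^*,\mathbf{z}_0)$; in particular the right-hand side is bounded independently of $T$ (the paper phrases this as: $R(t+1)$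 converges to zero).
   Context: Problem: $f:\mathbb{R}^{n_1}\to\mathbb{R}\cup\{+\infty\}$ and $g:\mathbb{R}^{n_2}\to\mathbb{R}\cup\{+\infty\}$; $\mathbf{A}\in\mathbb{R}^{m\times n_1}$, $\mathbf{B}\in\mathbb{R}^{m\times n_2}$, $\mathbf{c}\in\mathbb{R}^m$; $\mathcal{X}\subseteq\mathbb{R}^{n_1}$, $\mathcal{Z}\subseteq\mathbb{R}^{n_2}$ convex; the problem is $\min f(\mathbf{x})+g(\mathbf{z})$ s.t. $\mathbf{x}\in\mathcal{X},\mathbf{z}\in\mathcal{Z},\mathbf{A}\mathbf{x}+\mathbf{B}\mathbf{z}=\mathbf{c}$. For a continuously differentiable, strictly convex function $\psi$ on (the relative interior of) a convex set, $B_\psi(\mathbf{u},\mathbf{v})=\psi(\mathbf{u})-\psi(\mathbf{v})-\langle\nabla\psi(\mathbf{v}),\mathbf{u}-\mathbf{v}\rangle\ge 0$. Three such functions are fixed: $\phi$ (on a convex subset of $\mathbb{R}^m$), $\varphi_{\mathbf{x}}$, $\varphi_{\mathbf{z}}$. Generalized Bregman ADMM: given $(\mathbf{x}_0,\mathbf{z}_0,\mathbf{y}_0)$ and parameters $\rho>0,\tau>0,\rho_{\mathbf{x}}\ge0,\rho_{\mathbf{z}}\ge0$, for $t\ge0$: $\mathbf{x}_{t+1}=\arg\min_{\mathbf{x}\in\mathcal{X}} f(\mathbf{x})+\langle\mathbf{y}_t,\mathbf{A}\mathbf{x}+\mathbf{B}\mathbf{z}_t-\mathbf{c}\rangle+\rho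 B_\phi(\mathbf{c}-\mathbf{A}\mathbf{x},\mathbf{B}\mathbf{z}_t)+\rho_{\mathbf{x}}B_{\varphi_{\mathbf{x}}}(\mathbf{x},\mathbf{x}_t)$; $\mathbf{z}_{t+1}=\arg\min_{\mathbf{z}\in\mathcal{Z}} g(\mathbf{z})+\langle\mathbf{y}_t,\mathbf{A}\mathbf{x}_{t+1}+\mathbf{B}\mathbf{z}-\mathbf{c}\rangle+\rho B_\phi(\mathbf{B}\mathbf{z},\mathbf{c}-\mathbf{A}\mathbf{x}_{t+1})+\rho_{\mathbf{z}}B_{\varphi_{\mathbf{z}}}(\mathbf{z},\mathbf{z}_t)$; $\mathbf{y}_{t+1}=\mathbf{y}_t+\tau(\mathbf{A}\mathbf{x}_{t+1}+\mathbf{B}\mathbf{z}_{t+1}-\mathbf{c})$. Standing assumptions: the minimizers exist; all Bregman divergences are evaluated at points where they are defined; and the minimizers satisfy the first-order optimality conditions $-\mathbf{A}^T\{\mathbf{y}_t+\rho(\nabla\phi(\mathbf{B}\mathbf{z}_t)-\nabla\phi(\mathbf{c}-\mathbf{A}\mathbf{x}_{t+1}))\}-\rho_{\mathbf{x}}(\nabla\varphi_{\mathbf{x}}(\mathbf{x}_{t+1})-\nabla\varphi_{\mathbf{x}}(\mathbf{x}_t))\in\partial f(\mathbf{x}_{t+1})$ and $-\mathbf{B}^T\{\mathbf{y}_t+\rho(\nabla\phi(\mathbf{B}\mathbf{z}_{t+1})-\nabla\phi(\mathbf{c}-\mathbf{A}\mathbf{x}_{t+1}))\}-\rho_{\mathbf{z}}(\nabla\varphi_{\mathbf{z}}(\mathbf{z}_{t+1})-\nabla\varphi_{\mathbf{z}}(\mathbf{z}_t))\in\partial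 g(\mathbf{z}_{t+1})$. Assumption 1: (a) $f,g$ are closed, proper, convex; (b) an optimal solution exists; (c) $B_\phi(\mathbf{u},\mathbf{v})\ge\frac{\alpha}{2}\|\mathbf{u}-\mathbf{v}\|_p^2$ for some $\alpha>0$, $p>0$. A KKT point is $(\mathbf{x}^*,\mathbf{z}^*,\mathbf{y}^* )$ with $-\mathbf{A}^T\mathbf{y}^*\in\partial f(\mathbf{x}^* )$, $-\mathbf{B}^T\mathbf{y}^*\in\partial g(\mathbf{z}^* )$, $\mathbf{A}\mathbf{x}^*+\mathbf{B}\mathbf{z}^*=\mathbf{c}$; $\mathbf{w}_t=(\mathbf{x}_t,\mathbf{z}_t,\mathbf{y}_t)$, $\mathbf{w}^*=(\mathbf{x}^*,\mathbf{z}^*,\mathbf{y}^* )$. *)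

theory Defs
  imports "HOL-Analysis.Analysis"
begin

definition strictly_convex_on :: "'a::real_vector set \<Rightarrow> ('a \<Rightarrow> real) \<Rightarrow> bool" where
  "strictly_convex_on S f \<longleftrightarrow> convex_on S f \<and>
     (\<forall>x\<in>S. \<forall>y\<in>S. \<forall>t. x \<noteq> y \<and> 0 < t \<and> t < 1 \<longrightarrow>
        f ((1 - t) *\<^sub>R x + t *\<^sub>R y) < (1 - t) * f x + t * f y)"

definition bregman_gen :: "('a::euclidean_space \<Rightarrow> real) \<Rightarrow> ('a \<Rightarrow> 'a) \<Rightarrow> 'a set \<Rightarrow> bool" where
  "bregman_gen psi grad S \<longleftrightarrow> convex S \<and> strictly_convex_on S psi \<and>
     (\<forall>v\<in>rel_interior S. (psi has_derivative (\<lambda>h. grad v \<bullet> h)) (at v within S)) \<and>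
     continuous_on (rel_interior S) grad"

definition bregman :: "('a::real_inner \<Rightarrow> real) \<Rightarrow> ('a \<Rightarrow> 'a) \<Rightarrow> 'a \<Rightarrow> 'a \<Rightarrow> real" where
  "bregman psi grad u v = psi u - psi v - grad v \<bullet> (u - v)"

definition pnorm :: "real \<Rightarrow> real^'m \<Rightarrow> real" where
  "pnorm p u = (\<Sum>i\<in>UNIV. \<bar>u $ i\<bar> powr p) powr (1 / p)"

definition proper_fun :: "('a \<Rightarrow> ereal) \<Rightarrow> bool" where
  "proper_fun f \<longleftrightarrow> (\<forall>x. f x \<noteq> -\<infinity>) \<and> (\<exists>x. f x < \<infinity>)"

definition epi :: "('a \<Rightarrow> ereal) \<Rightarrow> ('a \<times> real) set" where
  "epi f = {(x, r). f x \<le> ereal r}"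

definition convex_fun :: "('a::real_vector \<Rightarrow> ereal) \<Rightarrow> bool" where
  "convex_fun f \<longleftrightarrow> convex (epi f)"

definition closed_fun :: "('a::topological_space \<Rightarrow> ereal) \<Rightarrow> bool" where
  "closed_fun f \<longleftrightarrow> closed (epi f)"

definition subdiff :: "('a::real_inner \<Rightarrow> ereal) \<Rightarrow> 'a \<Rightarrow> 'a set" where
  "subdiff f x = {s. f x < \<infinity> \<and> (\<forall>u. f x + ereal (s \<bullet> (u - x)) \<le> f u)}"

end

theory Submission
  imports Defs
begin

text \<open>With \<open>\<rho> = \<surd>T\<close>, the first-order conditions of the two primal updates, tested against the
  KKT point and combined by the three-point identity of Bregman divergences, show that
  the Lyapunov function \<open>D(w\<^sup>*, w\<^sub>t)\<close> decreases in each step by at least \<open>R(t+1)\<close>, up to an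
  error \<open>(c\<^sub>2/2 + \<gamma>) \<parallel>A x\<^sub>t\<^sub>+\<^sub>1 + B z\<^sub>t\<^sub>+\<^sub>1 - c\<parallel>\<^sup>2\<close>. The residual equals \<open>(y\<^sub>t\<^sub>+\<^sub>1 - y\<^sub>t)/\<tau>\<close>, so bounded
  dual iterates make this error \<open>O(D\<^sub>y\<^sup>2/T)\<close>; summing the telescoping inequality over
  \<open>T\<close> steps gives the bound. Only the first-order conditions of the updates and properness
  of \<open>f\<close>, \<open>g\<close> enter.\<close>

lemma bregman_nonneg:
  fixes psi :: "'a::euclidean_space \<Rightarrow> real"
  assumes gen: "bregman_gen psi grad S" and u: "u \<in> S" and v: "v \<in> rel_interior S"
  shows "bregman psi grad u v \<ge> 0"
proof -
  from gen v have "convex S" and cvx: "convex_on S psi"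
    and d: "(psi has_derivative (\<lambda>h. grad v \<bullet> h)) (at v within S)"
    by (auto simp: bregman_gen_def strictly_convex_on_def)
  have vS: "v \<in> S" using v rel_interior_subset by blast
  define p where "p = (\<lambda>s::real. v + s *\<^sub>R (u - v))"
  have p_conv: "p s = (1 - s) *\<^sub>R v + s *\<^sub>R u" for s
    by (simp add: p_def algebra_simps)
  have "p ` {0..1} \<subseteq> S"
    using \<open>convex S\<close> u vS by (auto simp: p_conv intro!: convexD_alt)
  then have "(psi has_derivative (\<lambda>h. grad v \<bullet> h)) (at (p 0) within p ` {0..1})"
    using has_derivative_subset[OF d] by (simp add: p_def)
  moreover have "(p has_derivative (\<lambda>s. s *\<^sub>R (u - v))) (at 0 within {0..1})"
    unfolding p_def by (auto intro!: derivative_eq_intros)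
  ultimately have "((\<lambda>s. psi (p s)) has_derivative (\<lambda>s. grad v \<bullet> (s *\<^sub>R (u - v)))) (at 0 within {0..1})"
    by (rule has_derivative_in_compose[rotated])
  then have "((\<lambda>s. psi (p s)) has_field_derivative (grad v \<bullet> (u - v))) (at 0 within {0..1})"
    by (simp add: has_field_derivative_def mult_commute_abs)
  then have lim: "((\<lambda>s. (psi (p s) - psi (p 0)) / (s - 0)) \<longlongrightarrow> grad v \<bullet> (u - v)) (at_right 0)"
    unfolding has_field_derivative_iff at_within_Icc_at_right[OF zero_less_one] .
  \<comment> \<open>convexity bounds every difference quotient along the segment by \<open>psi u - psi v\<close>\<close>
  have "eventually (\<lambda>s. (psi (p s) - psi (p 0)) / (s - 0) \<le> psi u - psi v) (at_right (0::real))"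
    using eventually_at_right_real[OF zero_less_one]
  proof eventually_elim
    case (elim s)
    then have s: "0 < s" "s < 1" by auto
    have "psi (p s) \<le> (1 - s) * psi v + s * psi u"
      unfolding p_conv using s u vS by (intro convex_onD[OF cvx]) auto
    then have "psi (p s) - psi (p 0) \<le> s * (psi u - psi v)"
      by (simp add: p_def algebra_simps)
    then show ?case using s by (simp add: divide_le_eq mult.commute)
  qed
  then have "grad v \<bullet> (u - v) \<le> psi u - psi v"
    by (rule tendsto_upperbound[OF lim]) simp
  then show ?thesis by (simp add: bregman_def)
qed

lemma subdiff_monotone:
  assumes "s \<in> subdiff f p" and "s' \<in> subdiff f q" and "\<forall>u. f u \<noteq> -\<infinity>"
  shows "(s - s') \<bullet> (q - p) \<le> 0"
proof -
  from assms have p: "f p < \<infinity>" "f p + ereal (s \<bullet> (q - p)) \<le> f q"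
    and q: "f q < \<infinity>" "f q + ereal (s' \<bullet> (p - q)) \<le> f p"
    by (auto simp: subdiff_def)
  obtain P Q where "f p = ereal P" "f q = ereal Q"
    using p(1) q(1) assms(3) by (cases "f p"; cases "f q") auto
  with p(2) q(2) show ?thesis by (simp add: inner_diff_left inner_diff_right)
qed

lemma bregman_three_point:
  "(grad b - grad a) \<bullet> (u - a) = bregman psi grad u a + bregman psi grad a b - bregman psi grad u b"
  by (simp add: bregman_def inner_diff_left inner_diff_right algebra_simps)

lemma scaled_increment_bound:
  fixes y y' r :: "'a::real_normed_vector"
  assumes "y' = y + \<tau> *\<^sub>R r" and "\<tau> > 0" and "norm y \<le> D" and "norm y' \<le> D"
  shows "\<tau>\<^sup>2 * (norm r)\<^sup>2 \<le> 4 * D\<^sup>2"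
proof -
  have "\<tau> * norm r = norm (y' - y)"
    using assms(1,2) by simp
  also have "\<dots> \<le> 2 * D"
    using norm_triangle_ineq4[of y' y] assms(3,4) by simp
  finally have "(\<tau> * norm r)\<^sup>2 \<le> (2 * D)\<^sup>2"
    using assms(2) by (intro power_mono) auto
  then show ?thesis
    by (simp add: power_mult_distrib)
qed

lemma sum_le_telescoping:
  fixes a P :: "nat \<Rightarrow> real"
  assumes "\<And>t. t < n \<Longrightarrow> a t \<le> P t - P (Suc t) + e" and "P n \<ge> 0"
  shows "(\<Sum>t<n. a t) \<le> P 0 + n * e"
proof -
  have "(\<Sum>t<n. a t) \<le> (\<Sum>t<n. P t - P (Suc t) + e)"
    using assms(1) by (intro sum_mono) simp
  also have "\<dots> = P 0 - P n + n * e"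
    by (simp add: sum.distrib sum_lessThan_telescope')
  finally show ?thesis
    using assms(2) by simp
qed

text \<open>One primal block of the ADMM step, tested against its KKT component: \<open>v\<close> is the
  multiplier estimate appearing in the first-order condition of the update \<open>u \<mapsto> u'\<close>.\<close>

lemma subdiff_bregman_block:
  fixes M :: "real^'n^'m"
  assumes finite: "\<forall>p. f p \<noteq> -\<infinity>"
    and kkt: "- (transpose M *v ys) \<in> subdiff f us"
    and foc: "- (transpose M *v v) - r *\<^sub>R (gpsi u' - gpsi u) \<in> subdiff f u'"
  shows "(v - ys) \<bullet> (M *v u' - M *v us)
           + r * (bregman psi gpsi us u' + bregman psi gpsi u' u - bregman psi gpsi us u) \<le> 0"
proof -
  have "(transpose M *v (v - ys) + r *\<^sub>R (gpsi u' - gpsi u)) \<bullet> (u' - us) \<le> 0"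
    using subdiff_monotone[OF kkt foc finite]
    by (simp add: matrix_vector_mult_diff_distrib algebra_simps)
  moreover have "(transpose M *v (v - ys)) \<bullet> (u' - us) = (v - ys) \<bullet> (M *v u' - M *v us)"
    by (metis dot_lmul_matrix transpose_matrix_vector matrix_vector_mult_diff_distrib)
  moreover have "(gpsi u' - gpsi u) \<bullet> (u' - us)
      = bregman psi gpsi us u' + bregman psi gpsi u' u - bregman psi gpsi us u"
    using bregman_three_point[of gpsi u u' us psi]
    by (simp add: inner_diff_left inner_diff_right algebra_simps)
  ultimately show ?thesis
    by (simp add: inner_add_left)
qed

lemma admm_step_descent:
  fixes A :: "real^'n1^'m" and B :: "real^'n2^'m"
  assumes f_finite: "\<forall>p. f p \<noteq> -\<infinity>" and g_finite: "\<forall>p. g p \<noteq> -\<infinity>"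
    and kkt_f: "- (transpose A *v ys) \<in> subdiff f xs"
    and kkt_g: "- (transpose B *v ys) \<in> subdiff g zs"
    and kkt_feas: "A *v xs + B *v zs = c"
    and foc_x: "- (transpose A *v (y + \<rho> *\<^sub>R (gphi (B *v z) - gphi (c - A *v x'))))
                  - \<rho>x *\<^sub>R (gphix x' - gphix x) \<in> subdiff f x'"
    and foc_z: "- (transpose B *v (y + \<rho> *\<^sub>R (gphi (B *v z') - gphi (c - A *v x'))))
                  - \<rho>z *\<^sub>R (gphiz z' - gphiz z) \<in> subdiff g z'"
    and y_step: "y' = y + \<tau> *\<^sub>R (A *v x' + B *v z' - c)"
    and \<tau>_pos: "\<tau> > 0"
  shows "\<rho>x * bregman phix gphix x' x + \<rho>z * bregman phiz gphiz z' z
          + \<rho> * bregman phi gphi (c - A *v x') (B *v z) + \<rho> * bregman phi gphi (B *v z') (c - A *v x')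
          + ((norm (ys - y'))\<^sup>2 / (2 * \<tau>) + \<rho> * bregman phi gphi (B *v zs) (B *v z')
             + \<rho>x * bregman phix gphix xs x' + \<rho>z * bregman phiz gphiz zs z')
        \<le> (norm (ys - y))\<^sup>2 / (2 * \<tau>) + \<rho> * bregman phi gphi (B *v zs) (B *v z)
             + \<rho>x * bregman phix gphix xs x + \<rho>z * bregman phiz gphiz zs z
          + \<tau> / 2 * (norm (A *v x' + B *v z' - c))\<^sup>2"
proof -
  define a w r where "a = c - A *v x'" and "w = B *v zs" and "r = A *v x' + B *v z' - c"
  have x_block: "(y + \<rho> *\<^sub>R (gphi (B *v z) - gphi a) - ys) \<bullet> (w - a)
      + \<rho>x * (bregman phix gphix xs x' + bregman phix gphix x' x - bregman phix gphix xs x) \<le> 0"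
  proof -
    have "A *v x' - A *v xs = w - a"
      using kkt_feas by (simp add: a_def w_def algebra_simps)
    with subdiff_bregman_block[OF f_finite kkt_f foc_x, where psi = phix] show ?thesis
      unfolding a_def by simp
  qed
  have z_block: "(y + \<rho> *\<^sub>R (gphi (B *v z') - gphi a) - ys) \<bullet> (B *v z' - w)
      + \<rho>z * (bregman phiz gphiz zs z' + bregman phiz gphiz z' z - bregman phiz gphiz zs z) \<le> 0"
    using subdiff_bregman_block[OF g_finite kkt_g foc_z, where psi = phiz] by (simp add: a_def w_def)
  have phi_x: "(gphi (B *v z) - gphi a) \<bullet> (w - a)
      = bregman phi gphi w a + bregman phi gphi a (B *v z) - bregman phi gphi w (B *v z)"
    by (rule bregman_three_point)
  have phi_z: "(gphi (B *v z') - gphi a) \<bullet> (B *v z' - w)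
      = bregman phi gphi w (B *v z') + bregman phi gphi (B *v z') a - bregman phi gphi w a"
    using bregman_three_point[of gphi a "B *v z'" w phi]
    by (simp add: inner_diff_left inner_diff_right algebra_simps)
  have residual: "(y - ys) \<bullet> (w - a) + (y - ys) \<bullet> (B *v z' - w) = (y - ys) \<bullet> r"
    by (simp add: a_def r_def inner_diff_right algebra_simps)
  \<comment> \<open>the dual update turns the coupling term into a difference of squared distances to \<open>ys\<close>\<close>
  have "(norm (ys - y'))\<^sup>2 = (norm (ys - y))\<^sup>2 + 2 * \<tau> * ((y - ys) \<bullet> r) + \<tau>\<^sup>2 * (norm r)\<^sup>2"
    unfolding y_step r_def[symmetric] power2_norm_eq_inner
    by (simp add: inner_diff_left inner_diff_right inner_commute power2_eq_square algebra_simps)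
  then have dual: "(y - ys) \<bullet> r
      = (norm (ys - y'))\<^sup>2 / (2 * \<tau>) - (norm (ys - y))\<^sup>2 / (2 * \<tau>) - \<tau> / 2 * (norm r)\<^sup>2"
    using \<tau>_pos by (simp add: field_simps power2_eq_square)
  have inner_shift: "(y + \<rho> *\<^sub>R d - ys) \<bullet> e = (y - ys) \<bullet> e + \<rho> * (d \<bullet> e)" for d e
    by (simp add: inner_add_left inner_diff_left)
  show ?thesis
    unfolding a_def[symmetric] w_def[symmetric] r_def[symmetric]
    using x_block z_block residual dual unfolding inner_shift phi_x phi_z ring_distribs
    by linarith
qed

lemma admm_step_descent_normalized:
  fixes A :: "real^'n1^'m" and B :: "real^'n2^'m"
  assumes f_finite: "\<forall>p. f p \<noteq> -\<infinity>" and g_finite: "\<forall>p. g p \<noteq> -\<infinity>"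
    and kkt_f: "- (transpose A *v ys) \<in> subdiff f xs"
    and kkt_g: "- (transpose B *v ys) \<in> subdiff g zs"
    and kkt_feas: "A *v xs + B *v zs = c"
    and foc_x: "- (transpose A *v (y + \<rho> *\<^sub>R (gphi (B *v z) - gphi (c - A *v x'))))
                  - \<rho>x *\<^sub>R (gphix x' - gphix x) \<in> subdiff f x'"
    and foc_z: "- (transpose B *v (y + \<rho> *\<^sub>R (gphi (B *v z') - gphi (c - A *v x'))))
                  - \<rho>z *\<^sub>R (gphiz z' - gphiz z) \<in> subdiff g z'"
    and y_step: "y' = y + \<tau> *\<^sub>R (A *v x' + B *v z' - c)"
    and \<rho>_pos: "\<rho> > 0" and c2_pos: "c2 > 0"
    and \<rho>x: "\<rho>x = c1 * \<rho>" and \<rho>z: "\<rho>z = c1 * \<rho>" and \<tau>: "\<tau> = c2 * \<rho>"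
    and nonneg: "bregman phi gphi (B *v z') (c - A *v x') \<ge> 0"
  shows "c1 * bregman phix gphix x' x + c1 * bregman phiz gphiz z' z
          + bregman phi gphi (c - A *v x') (B *v z)
          + (1 / (2 * c2 * \<rho>\<^sup>2) * (norm (ys - y'))\<^sup>2 + bregman phi gphi (B *v zs) (B *v z')
             + c1 * bregman phix gphix xs x' + c1 * bregman phiz gphiz zs z')
        \<le> 1 / (2 * c2 * \<rho>\<^sup>2) * (norm (ys - y))\<^sup>2 + bregman phi gphi (B *v zs) (B *v z)
             + c1 * bregman phix gphix xs x + c1 * bregman phiz gphiz zs z
          + c2 / 2 * (norm (A *v x' + B *v z' - c))\<^sup>2"
    (is "?L \<le> ?R")
proof -
  have "\<tau> > 0"
    using \<rho>_pos c2_pos by (simp add: \<tau>)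
  note descent = admm_step_descent[OF f_finite g_finite kkt_f kkt_g kkt_feas foc_x foc_z y_step this,
      where phi = phi and phix = phix and phiz = phiz]
  have scale: "\<rho> * (1 / (2 * c2 * \<rho>\<^sup>2) * N) = N / (2 * \<tau>)" for N
    using \<rho>_pos by (simp add: \<tau> power2_eq_square)
  have "\<rho> * (?L + bregman phi gphi (B *v z') (c - A *v x')) \<le> \<rho> * ?R"
    using descent unfolding distrib_left scale by (simp add: \<rho>x \<rho>z \<tau> algebra_simps)
  then show ?thesis
    using \<rho>_pos nonneg by simp
qed

theorem theorem3:
  fixes f :: "real^'n1 \<Rightarrow> ereal" and g :: "real^'n2 \<Rightarrow> ereal"
    and A :: "real^'n1^'m" and B :: "real^'n2^'m" and c :: "real^'m"
    and X :: "(real^'n1) set" and Z :: "(real^'n2) set"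
    and phi :: "real^'m \<Rightarrow> real" and gphi :: "real^'m \<Rightarrow> real^'m" and Sphi :: "(real^'m) set"
    and phix :: "real^'n1 \<Rightarrow> real" and gphix :: "real^'n1 \<Rightarrow> real^'n1" and Sx :: "(real^'n1) set"
    and phiz :: "real^'n2 \<Rightarrow> real" and gphiz :: "real^'n2 \<Rightarrow> real^'n2" and Sz :: "(real^'n2) set"
    and x :: "nat \<Rightarrow> real^'n1" and z :: "nat \<Rightarrow> real^'n2" and y :: "nat \<Rightarrow> real^'m"
    and xs :: "real^'n1" and zs :: "real^'n2" and ys :: "real^'m"
    and \<gamma> c1 c2 Dy \<rho> \<rho>x \<rho>z \<tau> :: real and T :: nat
  assumes convX: "convex X" and convZ: "convex Z"
    and gen_phi: "bregman_gen phi gphi Sphi"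
    and gen_phix: "bregman_gen phix gphix Sx"
    and gen_phiz: "bregman_gen phiz gphiz Sz"
    \<comment> \<open>Assumption 1\<close>
    and f_cpc: "closed_fun f \<and> proper_fun f \<and> convex_fun f"
    and g_cpc: "closed_fun g \<and> proper_fun g \<and> convex_fun g"
    and opt_exists: "\<exists>xo\<in>X. \<exists>zo\<in>Z. A *v xo + B *v zo = c \<and>
        (\<forall>x'\<in>X. \<forall>z'\<in>Z. A *v x' + B *v z' = c \<longrightarrow> f xo + g zo \<le> f x' + g z')"
    and strong_phi: "\<exists>\<alpha>>0. \<exists>p>0. \<forall>u\<in>Sphi. \<forall>v\<in>rel_interior Sphi.
        bregman phi gphi u v \<ge> \<alpha> / 2 * (pnorm p (u - v))\<^sup>2"
    \<comment> \<open>KKT point\<close>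
    and kkt_f: "- (transpose A *v ys) \<in> subdiff f xs"
    and kkt_g: "- (transpose B *v ys) \<in> subdiff g zs"
    and kkt_feas: "A *v xs + B *v zs = c"
    and \<gamma>_pos: "\<gamma> > 0" and c1_pos: "c1 > 0" and c2_pos: "c2 > 0" and T_ge: "T \<ge> 1"
    and \<rho>_def: "\<rho> = sqrt (real T)" and \<rho>x_def: "\<rho>x = c1 * sqrt (real T)"
    and \<rho>z_def: "\<rho>z = c1 * sqrt (real T)" and \<tau>_def: "\<tau> = c2 * sqrt (real T)"
    \<comment> \<open>Bregman divergences are evaluated where they are defined\<close>
    and dom_x: "\<And>t. x t \<in> rel_interior Sx"
    and dom_z: "\<And>t. z t \<in> rel_interior Sz"
    and dom_Bz: "\<And>t. B *v z t \<in> rel_interior Sphi"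
    and dom_cAx: "\<And>t. c - A *v x (Suc t) \<in> rel_interior Sphi"
    and dom_xs: "xs \<in> Sx" and dom_zs: "zs \<in> Sz" and dom_Bzs: "B *v zs \<in> Sphi"
    \<comment> \<open>x-update: x (t+1) is a minimizer (over the points of X where the divergences are defined)\<close>
    and x_step: "\<And>t. x (Suc t) \<in> X \<and>
        (\<forall>x'\<in>X. x' \<in> Sx \<longrightarrow> c - A *v x' \<in> Sphi \<longrightarrow>
          f (x (Suc t)) + ereal (y t \<bullet> (A *v x (Suc t) + B *v z t - c)
              + \<rho> * bregman phi gphi (c - A *v x (Suc t)) (B *v z t)
              + \<rho>x * bregman phix gphix (x (Suc t)) (x t))
          \<le> f x' + ereal (y t \<bullet> (A *v x' + B *v z t - c)
              + \<rho> * bregman phi gphi (c - A *v x') (B *v z t)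
              + \<rho>x * bregman phix gphix x' (x t)))"
    and z_step: "\<And>t. z (Suc t) \<in> Z \<and>
        (\<forall>z'\<in>Z. z' \<in> Sz \<longrightarrow> B *v z' \<in> Sphi \<longrightarrow>
          g (z (Suc t)) + ereal (y t \<bullet> (A *v x (Suc t) + B *v z (Suc t) - c)
              + \<rho> * bregman phi gphi (B *v z (Suc t)) (c - A *v x (Suc t))
              + \<rho>z * bregman phiz gphiz (z (Suc t)) (z t))
          \<le> g z' + ereal (y t \<bullet> (A *v x (Suc t) + B *v z' - c)
              + \<rho> * bregman phi gphi (B *v z') (c - A *v x (Suc t))
              + \<rho>z * bregman phiz gphiz z' (z t)))"
    and y_step: "\<And>t. y (Suc t) = y t + \<tau> *\<^sub>R (A *v x (Suc t) + B *v z (Suc t) - c)"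
    and foc_x: "\<And>t. - (transpose A *v (y t + \<rho> *\<^sub>R (gphi (B *v z t) - gphi (c - A *v x (Suc t)))))
          - \<rho>x *\<^sub>R (gphix (x (Suc t)) - gphix (x t)) \<in> subdiff f (x (Suc t))"
    and foc_z: "\<And>t. - (transpose B *v (y t + \<rho> *\<^sub>R (gphi (B *v z (Suc t)) - gphi (c - A *v x (Suc t)))))
          - \<rho>z *\<^sub>R (gphiz (z (Suc t)) - gphiz (z t)) \<in> subdiff g (z (Suc t))"
    and y_bdd: "\<And>t. norm (y t) \<le> Dy"
  shows "(\<Sum>t<T. c1 * bregman phix gphix (x (Suc t)) (x t)
                + c1 * bregman phiz gphiz (z (Suc t)) (z t)
                + bregman phi gphi (c - A *v x (Suc t)) (B *v z t)
                + \<gamma> * (norm (A *v x (Suc t) + B *v z (Suc t) - c))\<^sup>2)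
         \<le> (1 / (2 * c2 * real T)) * (norm (ys - y 0))\<^sup>2
             + bregman phi gphi (B *v zs) (B *v z 0)
             + c1 * bregman phix gphix xs (x 0)
             + c1 * bregman phiz gphiz zs (z 0)
           + 4 * (c2 / 2 + \<gamma>) * Dy\<^sup>2 / c2\<^sup>2"
proof -
  have \<rho>_pos: "\<rho> > 0" and \<rho>_sq: "\<rho>\<^sup>2 = real T"
    using T_ge by (auto simp: \<rho>_def)
  have \<tau>: "\<tau> = c2 * \<rho>" and \<tau>_pos: "\<tau> > 0"
    using \<tau>_def \<rho>_def c2_pos \<rho>_pos by auto
  have f_finite: "\<forall>p. f p \<noteq> -\<infinity>" and g_finite: "\<forall>p. g p \<noteq> -\<infinity>"
    using f_cpc g_cpc by (auto simp: proper_fun_def)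
  define K where "K t = (norm (A *v x (Suc t) + B *v z (Suc t) - c))\<^sup>2" for t
  define Phi where "Phi t = 1 / (2 * c2 * real T) * (norm (ys - y t))\<^sup>2
      + bregman phi gphi (B *v zs) (B *v z t) + c1 * bregman phix gphix xs (x t)
      + c1 * bregman phiz gphiz zs (z t)" for t
  define C where "C = 4 * (c2 / 2 + \<gamma>) * Dy\<^sup>2 / c2\<^sup>2"
  have residual: "(c2 / 2 + \<gamma>) * K t \<le> C / real T" for t
  proof -
    have "c2\<^sup>2 * real T * K t \<le> 4 * Dy\<^sup>2"
      using scaled_increment_bound[OF y_step[of t] \<tau>_pos y_bdd[of t] y_bdd[of "Suc t"]]
      by (simp add: K_def \<tau> power_mult_distrib \<rho>_sq)
    then have "(c2 / 2 + \<gamma>) * K t \<le> (c2 / 2 + \<gamma>) * (4 * Dy\<^sup>2 / (c2\<^sup>2 * real T))"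
      using c2_pos \<gamma>_pos T_ge by (intro mult_left_mono) (auto simp: field_simps)
    then show ?thesis
      unfolding C_def by (simp add: field_simps)
  qed
  have "c1 * bregman phix gphix (x (Suc t)) (x t) + c1 * bregman phiz gphiz (z (Suc t)) (z t)
      + bregman phi gphi (c - A *v x (Suc t)) (B *v z t) + \<gamma> * K t
      \<le> Phi t - Phi (Suc t) + C / real T" for t
  proof -
    have "B *v z (Suc t) \<in> Sphi"
      using dom_Bz rel_interior_subset by blast
    from admm_step_descent_normalized[OF f_finite g_finite kkt_f kkt_g kkt_feas foc_x foc_z y_step
        \<rho>_pos c2_pos _ _ \<tau> bregman_nonneg[OF gen_phi this dom_cAx]]
    have "c1 * bregman phix gphix (x (Suc t)) (x t) + c1 * bregman phiz gphiz (z (Suc t)) (z t)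
        + bregman phi gphi (c - A *v x (Suc t)) (B *v z t) + Phi (Suc t) \<le> Phi t + c2 / 2 * K t"
      unfolding Phi_def K_def \<rho>_sq[symmetric] using \<rho>x_def \<rho>z_def \<rho>_def by simp
    with residual[of t] show ?thesis
      by (simp add: algebra_simps)
  qed
  moreover have "Phi T \<ge> 0"
    using bregman_nonneg[OF gen_phi dom_Bzs dom_Bz] bregman_nonneg[OF gen_phix dom_xs dom_x]
      bregman_nonneg[OF gen_phiz dom_zs dom_z] c1_pos c2_pos unfolding Phi_def by simp
  ultimately show ?thesis
    using sum_le_telescoping[of T _ Phi "C / real T"] T_ge unfolding K_def Phi_def C_def by simp
qed

end
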